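(* Let $G=(V,E)$ be a cactus. If $X,Y\subseteq V$ are such that $\mathbf v(X)$ and $\mathbf v(Y)$ are distinct and adjacent vertices of $\mathrm{CUT}(G)$ (i.e. joined by an edge of the 1-skeleton of $\mathrm{CUT}(G)$), then $|\delta(X\triangle Y)|\le 2$.
   Context: For an undirected graph $G=(V,E)$ and $S\subseteq V$, $\delta(S)\subseteq E$ denotes the set of edges with exactly one endpoint in $S$, and $\mathbf v(S)\in\{0,1\}^{E}$ is its incidence vector ($v(S)_e=1$ iff $e\in\delta(S)$). The cut polytope is $\mathrm{CUT}(G)=\operatorname{conv}\{\mathbf v(S):S\subseteq V\}\subset\mathbb R^{E}$. The 1-skeleton of a polytope is the graph whose vertices are the polytope's vertices and whose edges are its one-dimensional faces. $X\triangle Y$ denotes symmetric difference. A cactus is a connected graph in which every edge belongs to at most one simple cycle. *)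

theory Defs
  imports "HOL-Analysis.Analysis"
begin

definition simple_graph :: "'v set \<Rightarrow> 'v set set \<Rightarrow> bool" where
  "simple_graph V E \<longleftrightarrow> finite V \<and> E \<subseteq> {{u, w} | u w. u \<in> V \<and> w \<in> V \<and> u \<noteq> w}"

definition graph_connected :: "'v set \<Rightarrow> 'v set set \<Rightarrow> bool" where
  "graph_connected V E \<longleftrightarrow>
     (\<forall>u\<in>V. \<forall>w\<in>V. (u, w) \<in> {(a, b). {a, b} \<in> E}\<^sup>*)"

definition simple_cycle :: "'v set set \<Rightarrow> 'v set set \<Rightarrow> bool" where
  "simple_cycle E C \<longleftrightarrow>
     (\<exists>vs. length vs \<ge> 3 \<and> distinct vs \<and>
        (\<forall>i < length vs. {vs ! i, vs ! ((i + 1) mod length vs)} \<in> E) \<and>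
        C = {{vs ! i, vs ! ((i + 1) mod length vs)} | i. i < length vs})"

definition cactus :: "'v set \<Rightarrow> 'v set set \<Rightarrow> bool" where
  "cactus V E \<longleftrightarrow> simple_graph V E \<and> graph_connected V E \<and>
     (\<forall>e\<in>E. \<forall>C1 C2. simple_cycle E C1 \<and> simple_cycle E C2 \<and> e \<in> C1 \<and> e \<in> C2 \<longrightarrow> C1 = C2)"

definition delta :: "'v set set \<Rightarrow> 'v set \<Rightarrow> 'v set set" where
  "delta E S = {e \<in> E. card (e \<inter> S) = 1}"

text \<open>Incidence vector of delta(S). R^E is embedded as the coordinate subspace of
  real^('v set) spanned by the coordinates e in E (other coordinates are 0).\<close>
definition cut_vec :: "'v::finite set set \<Rightarrow> 'v set \<Rightarrow> real ^ ('v set)" where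
  "cut_vec E S = (\<chi> e. if e \<in> delta E S then 1 else 0)"

definition CUT :: "'v::finite set \<Rightarrow> 'v set set \<Rightarrow> (real ^ ('v set)) set" where
  "CUT V E = convex hull (cut_vec E ` Pow V)"

definition skeleton_adjacent :: "(real ^ 'n) set \<Rightarrow> real ^ 'n \<Rightarrow> real ^ 'n \<Rightarrow> bool" where
  "skeleton_adjacent P p q \<longleftrightarrow>
     p extreme_point_of P \<and> q extreme_point_of P \<and>
     (\<exists>F. F face_of P \<and> aff_dim F = 1 \<and> p \<in> F \<and> q \<in> F)"

end

(*
  Suppose \<delta>(W) were a nonempty proper subset of \<delta>(X \<triangle> Y). Then the cut vectors of
  X \<triangle> W and Y \<triangle> W have the same midpoint as v(X) and v(Y), so, the edge of CUT(G)
  through v(X) and v(Y) being a face, v(X \<triangle> W) lies on the line through v(X) and v(Y);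
  comparing coordinates on \<delta>(W) and on \<delta>(X \<triangle> Y) - \<delta>(W) shows this is impossible.
  Hence \<delta>(X \<triangle> Y) is a bond (an inclusion-minimal nonempty cut), and both shores of a
  bond induce connected subgraphs. If a bond \<delta>(Z) had three edges e1, e2, e3, paths inside
  the two shores would close e1, e2 into a simple cycle meeting \<delta>(Z) only in e1 and e2, and
  e1, e3 into another simple cycle; in a cactus both cycles contain e1 and so coincide, which
  puts e3 on the first one.
*)
theory Submission
  imports Defs "HOL-Library.Transitive_Closure_Table"
begin

lemma simple_graph_edgeE:
  assumes "simple_graph V E" "e \<in> E"
  obtains u w where "e = {u, w}" "u \<noteq> w" "u \<in> V" "w \<in> V"
  using assms unfolding simple_graph_def by blast

lemma doubleton_in_delta_iff:
  assumes "u \<noteq> w"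
  shows "{u, w} \<in> delta E S \<longleftrightarrow> {u, w} \<in> E \<and> (u \<in> S \<longleftrightarrow> w \<notin> S)"
proof -
  have "card ({u, w} \<inter> S) = of_bool (u \<in> S) + of_bool (w \<in> S)"
    using assms by (cases "u \<in> S"; cases "w \<in> S") (auto simp: Int_insert_left)
  then show ?thesis
    unfolding delta_def by auto
qed

lemma delta_subset: "delta E S \<subseteq> E"
  unfolding delta_def by auto

lemma delta_cong_on_vertices:
  assumes "simple_graph V E" "S \<inter> V = T \<inter> V"
  shows "delta E S = delta E T"
proof -
  have "e \<in> delta E S \<longleftrightarrow> e \<in> delta E T" if e: "e \<in> E" for e
  proof -
    obtain u w where "e = {u, w}" "u \<noteq> w" "u \<in> V" "w \<in> V"
      using simple_graph_edgeE[OF assms(1) e] .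
    then show ?thesis
      using assms(2) doubleton_in_delta_iff[of u w E] by blast
  qed
  then show ?thesis
    using delta_subset by blast
qed

lemma delta_symdiff:
  assumes "simple_graph V E"
  shows "delta E (sym_diff S T) = sym_diff (delta E S) (delta E T)"
proof -
  have "e \<in> delta E (sym_diff S T) \<longleftrightarrow> (e \<in> delta E S \<longleftrightarrow> e \<notin> delta E T)"
    if e: "e \<in> E" for e
  proof -
    obtain u w where "e = {u, w}" "u \<noteq> w"
      using simple_graph_edgeE[OF assms e] by metis
    then show ?thesis
      using e doubleton_in_delta_iff[of u w E] by auto
  qed
  then show ?thesis
    using delta_subset by blast
qed

lemma delta_Compl:
  assumes "simple_graph V E"
  shows "delta E (- S) = delta E S"
proof -
  have "e \<in> delta E (- S) \<longleftrightarrow> e \<in> delta E S" if e: "e \<in> E" for e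
  proof -
    obtain u w where "e = {u, w}" "u \<noteq> w"
      using simple_graph_edgeE[OF assms e] by metis
    then show ?thesis
      using e doubleton_in_delta_iff[of u w E] by auto
  qed
  then show ?thesis
    using delta_subset by blast
qed

lemma edge_in_deltaE:
  assumes "simple_graph V E" "e \<in> delta E S"
  obtains u w where "e = {u, w}" "u \<in> S" "w \<notin> S" "u \<in> V" "w \<in> V"
proof -
  have "e \<in> E"
    using assms(2) delta_subset by blast
  then obtain u w where uw: "e = {u, w}" "u \<noteq> w" "u \<in> V" "w \<in> V"
    using simple_graph_edgeE[OF assms(1)] by metis
  then have "u \<in> S \<longleftrightarrow> w \<notin> S"
    using assms(2) doubleton_in_delta_iff by metis
  then show thesis
  proof (cases "u \<in> S")
    case True
    then show thesis using that[of u w] uw \<open>u \<in> S \<longleftrightarrow> w \<notin> S\<close> by blast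
  next
    case False
    then show thesis using that[of w u] uw \<open>u \<in> S \<longleftrightarrow> w \<notin> S\<close> by (simp add: insert_commute)
  qed
qed

lemma edge_not_in_delta_if_subset:
  assumes "simple_graph V E" "e \<in> E" "e \<subseteq> S \<or> e \<inter> S = {}"
  shows "e \<notin> delta E S"
proof
  assume "e \<in> delta E S"
  then obtain u w where "e = {u, w}" "u \<in> S" "w \<notin> S"
    using edge_in_deltaE[OF assms(1)] by metis
  then show False
    using assms(3) by auto
qed

lemma delta_nonempty_imp_not_subset:
  assumes "simple_graph V E" "delta E S \<noteq> {}"
  shows "\<not> V \<subseteq> S"
proof -
  obtain e where "e \<in> delta E S"
    using assms(2) by blast
  then obtain u w where "w \<notin> S" "w \<in> V"
    using edge_in_deltaE[OF assms(1)] by metis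
  then show ?thesis
    by blast
qed

lemma connected_delta_empty_imp_subset:
  assumes "simple_graph V E" "graph_connected V E" "s \<in> T" "s \<in> V" "delta E T = {}"
  shows "V \<subseteq> T"
proof
  fix v assume "v \<in> V"
  then have "(s, v) \<in> {(a, b). {a, b} \<in> E}\<^sup>*"
    using assms(2,4) unfolding graph_connected_def by blast
  then show "v \<in> T"
  proof (induction rule: rtrancl_induct)
    case (step y z)
    then have "{y, z} \<in> E"
      by simp
    then have "y \<noteq> z"
      using simple_graph_edgeE[OF assms(1)] by (metis doubleton_eq_iff)
    with step assms(5) show ?case
      using doubleton_in_delta_iff[of y z E T] by auto
  qed (use assms(3) in simp)
qed

lemma face_of_aff_dim_1_subset_affine_hull:
  fixes F P :: "'a::euclidean_space set"
  assumes "F face_of P" "aff_dim F = 1" "p \<in> F" "q \<in> F" "p \<noteq> q"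
  shows "F \<subseteq> affine hull {p, q}"
proof -
  have "affine hull {p, q} = affine hull F"
  proof (rule affine_dim_equal)
    show "affine hull {p, q} \<subseteq> affine hull F"
      using assms(3,4) by (intro hull_mono) auto
  qed (use assms(2,5) in \<open>simp_all add: aff_dim_2\<close>)
  then show ?thesis
    by (metis hull_subset)
qed

lemma face_of_aff_dim_1_midpoint:
  fixes F P :: "'a::euclidean_space set"
  assumes "F face_of P" "aff_dim F = 1" "p \<in> F" "q \<in> F" "p \<noteq> q"
    and "a \<in> P" "b \<in> P" "midpoint a b = midpoint p q"
  shows "a \<in> affine hull {p, q}"
proof -
  have "closed_segment p q \<subseteq> F"
    using face_of_imp_convex[OF assms(1)] assms(3,4) by (simp add: convex_contains_segment)
  then have "midpoint p q \<in> F"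
    using midpoint_in_closed_segment by blast
  then have "a \<in> F"
  proof (cases "a = b")
    case False
    then have "midpoint a b \<in> open_segment a b"
      by simp
    then show ?thesis
      using face_ofD[OF assms(1)] assms(6-8) \<open>midpoint p q \<in> F\<close> by metis
  qed (use assms(8) \<open>midpoint p q \<in> F\<close> in simp)
  then show ?thesis
    using face_of_aff_dim_1_subset_affine_hull[OF assms(1-5)] by blast
qed

lemma cut_vec_nth: "cut_vec E S $ e = of_bool (e \<in> delta E S)"
  unfolding cut_vec_def by simp

lemma cut_vec_in_CUT: "S \<subseteq> V \<Longrightarrow> cut_vec E S \<in> CUT V E"
  unfolding CUT_def by (auto intro: hull_inc)

lemma skeleton_adjacent_cut_vec_no_proper_subcut:
  assumes sg: "simple_graph V E" and "X \<subseteq> V" "Y \<subseteq> V"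
    and adj: "skeleton_adjacent (CUT V E) (cut_vec E X) (cut_vec E Y)"
    and sub: "delta E W \<subseteq> delta E (sym_diff X Y)"
  shows "delta E W = {} \<or> delta E W = delta E (sym_diff X Y)"
proof (rule ccontr)
  assume "\<not> ?thesis"
  then obtain e f where e: "e \<in> delta E W" and f: "f \<in> delta E (sym_diff X Y)" "f \<notin> delta E W"
    using sub by blast
  define W' where "W' = W \<inter> V"
  have dW': "delta E W' = delta E W"
    unfolding W'_def by (rule delta_cong_on_vertices[OF sg]) auto
  define p q a b where "p = cut_vec E X" and "q = cut_vec E Y"
    and "a = cut_vec E (sym_diff X W')" and "b = cut_vec E (sym_diff Y W')"
  note coords = p_def q_def a_def b_def cut_vec_nth delta_symdiff[OF sg] dW'
  obtain F where F: "F face_of CUT V E" "aff_dim F = 1" "p \<in> F" "q \<in> F"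
    using adj unfolding skeleton_adjacent_def p_def q_def by blast
  have "p \<noteq> q"
    using f by (auto simp: coords vec_eq_iff)
  moreover have "midpoint a b = midpoint p q"
    using sub by (auto simp: midpoint_def coords vec_eq_iff)
  moreover have "a \<in> CUT V E" "b \<in> CUT V E"
    using assms(2,3) unfolding a_def b_def W'_def by (auto intro!: cut_vec_in_CUT)
  ultimately have "a \<in> affine hull {p, q}"
    using face_of_aff_dim_1_midpoint[OF F] by blast
  then obtain u v where uv: "a = u *\<^sub>R p + v *\<^sub>R q" "u + v = 1"
    unfolding affine_hull_2 by blast
  \<comment> \<open>On \<open>e \<in> \<delta>(W)\<close> the point \<open>a\<close> agrees with \<open>q\<close> but not with \<open>p\<close>, forcing \<open>a = q\<close>;
    on \<open>f\<close> it agrees with \<open>p\<close> instead.\<close>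
  have "a $ e = u * p $ e + v * q $ e"
    using uv by simp
  then have "u = 0"
    using uv(2) e sub by (auto simp: coords split: if_splits)
  then have "a = q"
    using uv by simp
  moreover have "a $ f \<noteq> q $ f"
  proof -
    have "f \<in> delta E (sym_diff X W') \<longleftrightarrow> f \<notin> delta E Y"
      using f by (auto simp: delta_symdiff[OF sg] dW')
    then show ?thesis
      unfolding a_def q_def cut_vec_nth by simp
  qed
  ultimately show False
    by simp
qed

definition bond :: "'v set set \<Rightarrow> 'v set \<Rightarrow> bool" where
  "bond E S \<longleftrightarrow> delta E S \<noteq> {} \<and>
     (\<forall>W. delta E W \<subseteq> delta E S \<longrightarrow> delta E W = {} \<or> delta E W = delta E S)"

lemma bond_Compl:
  assumes "simple_graph V E"
  shows "bond E (- S) \<longleftrightarrow> bond E S"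
  unfolding bond_def delta_Compl[OF assms] ..

lemma skeleton_adjacent_cut_vec_imp_bond:
  assumes "simple_graph V E" "X \<subseteq> V" "Y \<subseteq> V" "cut_vec E X \<noteq> cut_vec E Y"
    and "skeleton_adjacent (CUT V E) (cut_vec E X) (cut_vec E Y)"
  shows "bond E (sym_diff X Y)"
proof -
  have "delta E X \<noteq> delta E Y"
    using assms(4) unfolding cut_vec_def by auto
  then have "delta E (sym_diff X Y) \<noteq> {}"
    unfolding delta_symdiff[OF assms(1)] by blast
  then show ?thesis
    unfolding bond_def using skeleton_adjacent_cut_vec_no_proper_subcut[OF assms(1-3,5)] by blast
qed

lemma delta_Un_no_crossing_edges:
  assumes sg: "simple_graph V E" and "A \<inter> B = {}" and no_cross: "\<forall>x\<in>A. \<forall>y\<in>B. {x, y} \<notin> E"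
  shows "delta E (A \<union> B) = delta E A \<union> delta E B" "delta E A \<inter> delta E B = {}"
proof -
  show disj: "delta E A \<inter> delta E B = {}"
  proof (rule ccontr)
    assume "delta E A \<inter> delta E B \<noteq> {}"
    then obtain e where "e \<in> delta E A" "e \<in> delta E B"
      by blast
    moreover obtain u w where "e = {u, w}" "u \<in> A" "w \<notin> A"
      using edge_in_deltaE[OF sg \<open>e \<in> delta E A\<close>] by metis
    ultimately have "w \<in> B" "e \<in> E"
      using \<open>A \<inter> B = {}\<close> delta_subset edge_not_in_delta_if_subset[OF sg] by blast+
    then show False
      using no_cross \<open>e = {u, w}\<close> \<open>u \<in> A\<close> by blast
  qed
  have "A \<union> B = sym_diff A B"
    using \<open>A \<inter> B = {}\<close> by blast
  then show "delta E (A \<union> B) = delta E A \<union> delta E B"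
    using delta_symdiff[OF sg, of A B] disj by auto
qed

definition induced_edge :: "'v set set \<Rightarrow> 'v set \<Rightarrow> 'v \<Rightarrow> 'v \<Rightarrow> bool" where
  "induced_edge E S x y \<longleftrightarrow> {x, y} \<in> E \<and> x \<in> S \<and> y \<in> S"

lemma bond_shore_connected:
  assumes sg: "simple_graph V E" and conn: "graph_connected V E" and "bond E S"
    and a: "a \<in> S" "a \<in> V" and x: "x \<in> S" "x \<in> V"
  shows "(induced_edge E S)\<^sup>*\<^sup>* a x"
proof (rule ccontr)
  assume "\<not> (induced_edge E S)\<^sup>*\<^sup>* a x"
  \<comment> \<open>\<open>\<delta>(S)\<close> splits disjointly into the cuts of the component \<open>K\<close> of \<open>a\<close> and of \<open>S - K\<close>;
    minimality leaves \<open>\<delta>(S - K) = {}\<close>, contradicting connectivity.\<close>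
  define K where "K = {y. (induced_edge E S)\<^sup>*\<^sup>* a y}"
  have "K \<subseteq> S"
  proof
    fix y assume "y \<in> K"
    then have "(induced_edge E S)\<^sup>*\<^sup>* a y"
      unfolding K_def by simp
    then show "y \<in> S"
      by (induction rule: rtranclp_induct) (auto simp: a induced_edge_def)
  qed
  have "{y, z} \<notin> E" if "y \<in> K" "z \<in> S - K" for y z
  proof
    assume "{y, z} \<in> E"
    then have "induced_edge E S y z"
      using that \<open>K \<subseteq> S\<close> unfolding induced_edge_def by auto
    then have "z \<in> K"
      using \<open>y \<in> K\<close> unfolding K_def by (simp add: rtranclp.rtrancl_into_rtrancl)
    then show False
      using that by blast
  qed
  then have "\<forall>y\<in>K. \<forall>z\<in>S - K. {y, z} \<notin> E"
    by blast
  moreover have "K \<inter> (S - K) = {}" "K \<union> (S - K) = S"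
    using \<open>K \<subseteq> S\<close> by auto
  ultimately have "delta E S = delta E K \<union> delta E (S - K)" "delta E K \<inter> delta E (S - K) = {}"
    using delta_Un_no_crossing_edges[OF sg, of K "S - K"] by simp_all
  moreover have "delta E K \<noteq> {}"
  proof
    assume "delta E K = {}"
    then have "V \<subseteq> S"
      using connected_delta_empty_imp_subset[OF sg conn, of a K] a \<open>K \<subseteq> S\<close>
      unfolding K_def by auto
    then show False
      using delta_nonempty_imp_not_subset[OF sg] \<open>bond E S\<close> unfolding bond_def by blast
  qed
  ultimately have "delta E (S - K) = {}"
    using \<open>bond E S\<close> unfolding bond_def by blast
  moreover have "x \<in> S - K"
    using \<open>\<not> (induced_edge E S)\<^sup>*\<^sup>* a x\<close> x unfolding K_def by simp
  ultimately have "V \<subseteq> S - K"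
    using connected_delta_empty_imp_subset[OF sg conn] x by blast
  then show False
    using a unfolding K_def by blast
qed

definition path_edges :: "'a list \<Rightarrow> 'a set set" where
  "path_edges vs = {{vs ! i, vs ! Suc i} | i. Suc i < length vs}"

lemma path_edgesI: "Suc i < length vs \<Longrightarrow> {vs ! i, vs ! Suc i} \<in> path_edges vs"
  unfolding path_edges_def by blast

lemma path_edgesE:
  assumes "e \<in> path_edges vs"
  obtains i where "Suc i < length vs" "e = {vs ! i, vs ! Suc i}"
  using assms unfolding path_edges_def by blast

lemma path_edges_append:
  assumes "p \<noteq> []" "q \<noteq> []"
  shows "path_edges (p @ q) = path_edges p \<union> path_edges q \<union> {{last p, hd q}}"
proof -
  have nth_p: "(p @ q) ! i = p ! i" if "i < length p" for i
    using that by (simp add: nth_append)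
  have nth_q: "(p @ q) ! (length p + i) = q ! i" for i
    by simp
  have last_hd: "(p @ q) ! (length p - 1) = last p" "(p @ q) ! Suc (length p - 1) = hd q"
    using assms nth_p[of "length p - 1"] nth_q[of 0] by (simp_all add: last_conv_nth hd_conv_nth)
  have "e \<in> path_edges p \<union> path_edges q \<union> {{last p, hd q}}" if "e \<in> path_edges (p @ q)" for e
  proof -
    from that obtain i where i: "Suc i < length (p @ q)" "e = {(p @ q) ! i, (p @ q) ! Suc i}"
      by (rule path_edgesE)
    consider "Suc i < length p" | "Suc i = length p" | "length p \<le> i"
      by linarith
    then show ?thesis
    proof cases
      case 1
      then show ?thesis
        using i nth_p[of i] nth_p[of "Suc i"] path_edgesI[of i p] by simp
    next
      case 2
      then have "i = length p - 1"
        by simp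
      then show ?thesis
        using i last_hd by simp
    next
      case 3
      then obtain j where "i = length p + j"
        using le_Suc_ex by blast
      then show ?thesis
        using i nth_q[of j] nth_q[of "Suc j"] path_edgesI[of j q] by simp
    qed
  qed
  moreover have "e \<in> path_edges (p @ q)" if "e \<in> path_edges p \<union> path_edges q \<union> {{last p, hd q}}" for e
  proof -
    from that consider "e \<in> path_edges p" | "e \<in> path_edges q" | "e = {last p, hd q}"
      by blast
    then show ?thesis
    proof cases
      case 1
      then obtain i where "Suc i < length p" "e = {p ! i, p ! Suc i}"
        by (rule path_edgesE)
      then show ?thesis
        using nth_p[of i] nth_p[of "Suc i"] path_edgesI[of i "p @ q"] by simp
    next
      case 2
      then obtain j where "Suc j < length q" "e = {q ! j, q ! Suc j}"
        by (rule path_edgesE)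
      then show ?thesis
        using nth_q[of j] nth_q[of "Suc j"] path_edgesI[of "length p + j" "p @ q"] by simp
    next
      case 3
      then show ?thesis
        using assms last_hd path_edgesI[of "length p - 1" "p @ q"] by simp
    qed
  qed
  ultimately show ?thesis
    by blast
qed

lemma cyclic_edges_eq_path_edges:
  assumes "vs \<noteq> []"
  shows "{{vs ! i, vs ! ((i + 1) mod length vs)} | i. i < length vs} = path_edges vs \<union> {{last vs, hd vs}}"
    (is "?C = _")
proof -
  have wrap: "{vs ! (length vs - 1), vs ! ((length vs - 1 + 1) mod length vs)} = {last vs, hd vs}"
    using assms by (simp add: last_conv_nth hd_conv_nth)
  have "e \<in> path_edges vs \<union> {{last vs, hd vs}}" if "e \<in> ?C" for e
  proof -
    from that obtain i where i: "i < length vs" "e = {vs ! i, vs ! ((i + 1) mod length vs)}"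
      by blast
    show ?thesis
    proof (cases "Suc i < length vs")
      case True
      then show ?thesis
        using i path_edgesI[of i vs] by simp
    next
      case False
      then have "i = length vs - 1"
        using i by simp
      then show ?thesis
        using i wrap by simp
    qed
  qed
  moreover have "e \<in> ?C" if "e \<in> path_edges vs" for e
  proof -
    from that obtain i where "Suc i < length vs" "e = {vs ! i, vs ! Suc i}"
      by (rule path_edgesE)
    moreover have "(i + 1) mod length vs = Suc i"
      using \<open>Suc i < length vs\<close> by simp
    ultimately show ?thesis
      by (metis (mono_tags, lifting) Suc_lessD mem_Collect_eq)
  qed
  moreover have "{last vs, hd vs} \<in> ?C"
  proof -
    have "length vs - 1 < length vs"
      using assms by simp
    then show ?thesis
      using wrap by (metis (mono_tags, lifting) mem_Collect_eq)
  qed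
  ultimately show ?thesis
    by blast
qed

lemma rtrancl_path_last_Cons: "rtrancl_path r a xs b \<Longrightarrow> last (a # xs) = b"
  by (cases xs) (auto simp: rtrancl_path_last elim: rtrancl_path.cases)

lemma rtrancl_path_induced_edges:
  assumes "rtrancl_path (induced_edge E S) a xs b"
  shows "path_edges (a # xs) \<subseteq> {e \<in> E. e \<subseteq> S}"
proof
  fix e assume "e \<in> path_edges (a # xs)"
  then obtain i where "i < length xs" "e = {(a # xs) ! i, xs ! i}"
    by (auto elim: path_edgesE)
  then show "e \<in> {e \<in> E. e \<subseteq> S}"
    using rtrancl_path_nth[OF assms] unfolding induced_edge_def by auto
qed

lemma rtrancl_path_induced_vertices:
  "rtrancl_path (induced_edge E S) a xs b \<Longrightarrow> a \<in> S \<Longrightarrow> set (a # xs) \<subseteq> S"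
  by (induction rule: rtrancl_path.induct) (auto simp: induced_edge_def)

lemma induced_edge_distinct_path:
  assumes "(induced_edge E S)\<^sup>*\<^sup>* a b"
  obtains xs where "rtrancl_path (induced_edge E S) a xs b" "distinct (a # xs)"
proof -
  obtain ys where "rtrancl_path (induced_edge E S) a ys b"
    using assms unfolding rtranclp_eq_rtrancl_path by blast
  then show thesis
    by (rule rtrancl_path_distinct) (rule that)
qed

lemma simple_cycle_through_two_cut_edges:
  assumes sg: "simple_graph V E" and "{a1, b1} \<in> E" "{a2, b2} \<in> E" "{a1, b1} \<noteq> {a2, b2}"
    and "a1 \<in> S" "a2 \<in> S" "b1 \<notin> S" "b2 \<notin> S"
    and "(induced_edge E S)\<^sup>*\<^sup>* a1 a2" "(induced_edge E (- S))\<^sup>*\<^sup>* b2 b1"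
  obtains C where "simple_cycle E C" "{a1, b1} \<in> C" "{a2, b2} \<in> C"
    "C \<inter> delta E S \<subseteq> {{a1, b1}, {a2, b2}}"
proof -
  obtain xs where xs: "rtrancl_path (induced_edge E S) a1 xs a2" "distinct (a1 # xs)"
    using induced_edge_distinct_path[OF assms(9)] .
  obtain ys where ys: "rtrancl_path (induced_edge E (- S)) b2 ys b1" "distinct (b2 # ys)"
    using induced_edge_distinct_path[OF assms(10)] .
  \<comment> \<open>The cycle runs from \<open>a1\<close> to \<open>a2\<close> inside \<open>S\<close>, crosses to \<open>b2\<close>, runs to \<open>b1\<close> outside \<open>S\<close>
    and closes with the edge \<open>{b1, a1}\<close>.\<close>
  define vs where "vs = (a1 # xs) @ (b2 # ys)"
  define C where "C = {{vs ! i, vs ! ((i + 1) mod length vs)} | i. i < length vs}"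
  have "last vs = b1" "hd vs = a1" "last (a1 # xs) = a2"
    using rtrancl_path_last_Cons[OF xs(1)] rtrancl_path_last_Cons[OF ys(1)] unfolding vs_def by simp_all
  moreover have "path_edges vs = path_edges (a1 # xs) \<union> path_edges (b2 # ys) \<union> {{last (a1 # xs), b2}}"
    unfolding vs_def using path_edges_append[of "a1 # xs" "b2 # ys"] by simp
  moreover have "C = path_edges vs \<union> {{last vs, hd vs}}"
    unfolding C_def by (rule cyclic_edges_eq_path_edges) (simp add: vs_def)
  ultimately have C_eq: "C = path_edges (a1 # xs) \<union> path_edges (b2 # ys) \<union> {{a2, b2}} \<union> {{b1, a1}}"
    by simp
  have path_S: "path_edges (a1 # xs) \<subseteq> {e \<in> E. e \<subseteq> S}"
    using rtrancl_path_induced_edges[OF xs(1)] .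
  have path_not_S: "path_edges (b2 # ys) \<subseteq> {e \<in> E. e \<subseteq> - S}"
    using rtrancl_path_induced_edges[OF ys(1)] .
  have "C \<subseteq> E"
    using C_eq path_S path_not_S assms(2,3) by (auto simp: insert_commute)
  then have "\<forall>i < length vs. {vs ! i, vs ! ((i + 1) mod length vs)} \<in> E"
    unfolding C_def by blast
  moreover have "distinct vs"
  proof -
    have "set (a1 # xs) \<subseteq> S" "set (b2 # ys) \<subseteq> - S"
      using rtrancl_path_induced_vertices[OF xs(1)] rtrancl_path_induced_vertices[OF ys(1)]
        \<open>a1 \<in> S\<close> \<open>b2 \<notin> S\<close> by simp_all
    then show ?thesis
      using xs(2) ys(2) unfolding vs_def distinct_append by blast
  qed
  moreover have "length vs \<ge> 3"
  proof (rule ccontr)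
    assume "\<not> length vs \<ge> 3"
    then have "xs = []" "ys = []"
      unfolding vs_def by (simp_all add: not_less_eq_eq)
    then have "a1 = a2" "b2 = b1"
      using rtrancl_path_last_Cons[OF xs(1)] rtrancl_path_last_Cons[OF ys(1)] by simp_all
    then show False
      using \<open>{a1, b1} \<noteq> {a2, b2}\<close> by simp
  qed
  ultimately have "simple_cycle E C"
    unfolding simple_cycle_def C_def by blast
  moreover have "{a1, b1} \<in> C" "{a2, b2} \<in> C"
    using C_eq by (simp_all add: insert_commute)
  moreover have "C \<inter> delta E S \<subseteq> {{a1, b1}, {a2, b2}}"
  proof -
    have "e \<notin> delta E S" if "e \<in> path_edges (a1 # xs) \<union> path_edges (b2 # ys)" for e
    proof -
      have "e \<in> E \<and> (e \<subseteq> S \<or> e \<inter> S = {})"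
        using that path_S path_not_S by blast
      then show ?thesis
        using edge_not_in_delta_if_subset[OF sg] by blast
    qed
    then show ?thesis
      using C_eq by (auto simp: insert_commute)
  qed
  ultimately show thesis
    using that by blast
qed

lemma cactus_bond_card_le_2:
  assumes "cactus V E" and bond: "bond E Z"
  shows "card (delta E Z) \<le> 2"
proof (rule ccontr)
  assume "\<not> card (delta E Z) \<le> 2"
  then obtain T where "T \<subseteq> delta E Z" "card T = 3"
    by (metis not_less_eq_eq numeral_2_eq_2 numeral_3_eq_3 obtain_subset_with_card_n)
  then obtain e1 e2 e3 where es: "e1 \<in> delta E Z" "e2 \<in> delta E Z" "e3 \<in> delta E Z"
    and "e1 \<noteq> e2" "e1 \<noteq> e3" "e2 \<noteq> e3"
    by (metis card_3_iff insert_subset)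
  have sg: "simple_graph V E" and conn: "graph_connected V E"
    and one_cycle: "\<And>e C C'. e \<in> E \<Longrightarrow> simple_cycle E C \<Longrightarrow> simple_cycle E C' \<Longrightarrow>
      e \<in> C \<Longrightarrow> e \<in> C' \<Longrightarrow> C = C'"
    using assms(1) unfolding cactus_def by blast+
  have bond': "bond E (- Z)"
    using bond bond_Compl[OF sg] by blast
  obtain a1 b1 where e1: "e1 = {a1, b1}" "a1 \<in> Z" "b1 \<notin> Z" "a1 \<in> V" "b1 \<in> V"
    using edge_in_deltaE[OF sg es(1)] .
  obtain a2 b2 where e2: "e2 = {a2, b2}" "a2 \<in> Z" "b2 \<notin> Z" "a2 \<in> V" "b2 \<in> V"
    using edge_in_deltaE[OF sg es(2)] .
  obtain a3 b3 where e3: "e3 = {a3, b3}" "a3 \<in> Z" "b3 \<notin> Z" "a3 \<in> V" "b3 \<in> V"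
    using edge_in_deltaE[OF sg es(3)] .
  have E: "{a1, b1} \<in> E" "{a2, b2} \<in> E" "{a3, b3} \<in> E"
    using es delta_subset e1(1) e2(1) e3(1) by blast+
  have shore_paths: "(induced_edge E Z)\<^sup>*\<^sup>* a1 a2" "(induced_edge E Z)\<^sup>*\<^sup>* a1 a3"
      "(induced_edge E (- Z))\<^sup>*\<^sup>* b2 b1" "(induced_edge E (- Z))\<^sup>*\<^sup>* b3 b1"
    using bond_shore_connected[OF sg conn bond] bond_shore_connected[OF sg conn bond'] e1 e2 e3
    by simp_all
  obtain C where C: "simple_cycle E C" "e1 \<in> C" "C \<inter> delta E Z \<subseteq> {e1, e2}"
    using simple_cycle_through_two_cut_edges[OF sg E(1,2) _ e1(2) e2(2) e1(3) e2(3) shore_paths(1,3)]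
      \<open>e1 \<noteq> e2\<close> unfolding e1(1) e2(1) by metis
  obtain C' where C': "simple_cycle E C'" "e1 \<in> C'" "e3 \<in> C'"
    using simple_cycle_through_two_cut_edges[OF sg E(1,3) _ e1(2) e3(2) e1(3) e3(3) shore_paths(2,4)]
      \<open>e1 \<noteq> e3\<close> unfolding e1(1) e3(1) by metis
  have "C = C'"
    using one_cycle[OF _ C(1) C'(1) C(2) C'(2)] E(1) e1(1) by blast
  then have "e3 \<in> C \<inter> delta E Z"
    using C'(3) es(3) by blast
  then show False
    using C(3) \<open>e1 \<noteq> e3\<close> \<open>e2 \<noteq> e3\<close> by blast
qed

theorem lemma1:
  fixes V :: "'v::finite set" and E :: "'v set set" and X Y :: "'v set"
  assumes "cactus V E"
    and "X \<subseteq> V" and "Y \<subseteq> V"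
    and "cut_vec E X \<noteq> cut_vec E Y"
    and "skeleton_adjacent (CUT V E) (cut_vec E X) (cut_vec E Y)"
  shows "card (delta E ((X - Y) \<union> (Y - X))) \<le> 2"
proof -
  have "simple_graph V E"
    using assms(1) unfolding cactus_def by simp
  then have "bond E ((X - Y) \<union> (Y - X))"
    using skeleton_adjacent_cut_vec_imp_bond assms(2-5) by blast
  then show ?thesis
    using cactus_bond_card_le_2[OF assms(1)] by blast
qed

end
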